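(* Assume $\ell=2$ and the IV model (exclusion, random assignment, consistency). Then for every full data law satisfying these assumptions and inducing an observed law $\mathcal P$, $$\max_{\mathbf v\in\mathcal V}\mathbf v^\top\mathbf p\;\le\;\mathrm{ATE}\;\le\;-\max_{\mathbf v\in\mathcal V}\mathbf v^\top\bar{\mathbf p},$$ and these bounds are sharp: for every observed law $\mathcal P$ induced by some full data law satisfying the assumptions, there exist full data laws satisfying the assumptions and inducing $\mathcal P$ whose ATE equals the lower bound and the upper bound, respectively.
   Context: IV setting: $D\in\{0,1\}$ treatment; $Y$ outcome with values $\gamma_0<\dots<\gamma_{n-1}$; instrument $Z\in\{0,1\}$; $[n]=\{0,\dots,n-1\}$. Potential outcomes $Y^{(d,z)}$, potential treatments $D^{(z)}$. Assumptions: (Exclusion) $Y^{(d,0)}=Y^{(d,1)}$ a.s., written $Y^{(d)}$; (Random assignment) $Z\perp(Y^{(0)},Y^{(1)},D^{(0)},D^{(1)})$; (Consistency) $Y=(1-D)Y^{(0)}+DY^{(1)}$, $D=\mathbb 1(Z=0)D^{(0)}+\mathbb 1(Z=1)D^{(1)}$. A full data law is a joint law of $(Y^{(0)},Y^{(1)},D^{(0)},D^{(1)},Z)$; it induces the observed law $\mathcal P$ of $(Y,D,Z)$, assumed to have $\mathcal P(Z=z)>0$. $\mathrm{ATE}=\mathbb E[Y^{(1)}-Y^{(0)}]$. Vectors $\mathbf p,\bar{\mathbf p}\in\mathbb R^{4n}$ have entries $p_{ydz}=\mathcal P(Y=\gamma_y,D=d\mid Z=z)$ and $\bar p_{ydz}=p_{y(1-d)z}$;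 $\mathbf v^\top\mathbf p=\sum_{y,d,z}v_{ydz}p_{ydz}$. The set $\mathcal V=\{\mathbf u(\mathbf B):\mathbf B\in S\}\subset\mathbb R^{4n}$ is defined as follows. $S=S_1\cup S_2\cup S_3\subseteq\{0,1\}^{n\times2\times2}$: $\mathbf B\in S_1$ iff some $t\in\{0,\dots,n-2\}$ has $B_{i00}=B_{i01}=1$ for $i\ge t$ and $B_{i00}\ne B_{i01}$ for $i<t$, $B_{i10}\ne B_{i11}$ for all $i$, and some $i,j$ have $B_{i10}=B_{j11}=1$; $\mathbf B\in S_2$ iff $B_{(n-1)00}=B_{(n-1)01}=B_{010}=B_{011}=1$, $B_{i00}\ne B_{i01}$ for $i<n-1$, $B_{j10}\ne B_{j11}$ for $j>0$; $\mathbf B\in S_3$ iff some $t\in\{1,\dots,n-1\}$ has $B_{i10}=B_{i11}=1$ for $i\le t$ and $B_{i10}\ne B_{i11}$ for $i>t$, $B_{i00}\ne B_{i01}$ for all $i$, and some $i,j$ have $B_{i00}=B_{j01}=1$. Set $\alpha=-\gamma_0-\gamma_t$ on $S_1$, $\alpha=-\gamma_0-\gamma_{n-1}$ on $S_2$, $\alpha=-\gamma_t-\gamma_{n-1}$ on $S_3$, and: $u_{i00}=-\gamma_i-\alpha$ if $B_{i00}=1$ else $\gamma_0$; $u_{i10}=\gamma_i$ if $B_{i10}=1$ else $-\gamma_{n-1}-\alpha$; $u_{i01}=-\gamma_i$ if $B_{i01}=1$ else $\gamma_0+\alpha$; $u_{i11}=\gamma_i+\alpha$ if $B_{i11}=1$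 else $-\gamma_{n-1}$. *)

theory Defs
  imports Main "HOL.Real"
begin

text \<open>Outcome values are gamma 0 < ... < gamma (n-1); outcomes are represented
by their indices in {..<n}. Treatment and instrument values are 0/1, encoded as nat < 2.
A full data law (exclusion already built in, as in the paper) is a probability mass
function q a b c d z = P(Y0 = gamma a, Y1 = gamma b, D0 = c, D1 = d, Z = z).\<close>

definition full_law :: "nat \<Rightarrow> (nat \<Rightarrow> nat \<Rightarrow> nat \<Rightarrow> nat \<Rightarrow> nat \<Rightarrow> real) \<Rightarrow> bool" where
  "full_law n q \<longleftrightarrow>
     (\<forall>a b c d z. 0 \<le> q a b c d z) \<and>
     (\<forall>a b c d z. \<not> (a < n \<and> b < n \<and> c < 2 \<and> d < 2 \<and> z < 2) \<longrightarrow> q a b c d z = 0) \<and>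
     (\<Sum>a<n. \<Sum>b<n. \<Sum>c<2. \<Sum>d<2. \<Sum>z<2. q a b c d z) = 1"

definition pZ :: "nat \<Rightarrow> (nat \<Rightarrow> nat \<Rightarrow> nat \<Rightarrow> nat \<Rightarrow> nat \<Rightarrow> real) \<Rightarrow> nat \<Rightarrow> real" where
  "pZ n q z = (\<Sum>a<n. \<Sum>b<n. \<Sum>c<2. \<Sum>d<2. q a b c d z)"

definition rand_assign :: "nat \<Rightarrow> (nat \<Rightarrow> nat \<Rightarrow> nat \<Rightarrow> nat \<Rightarrow> nat \<Rightarrow> real) \<Rightarrow> bool" where
  "rand_assign n q \<longleftrightarrow>
     (\<forall>a b c d z. q a b c d z = (\<Sum>z'<2. q a b c d z') * pZ n q z)"

definition IV_law :: "nat \<Rightarrow> (nat \<Rightarrow> nat \<Rightarrow> nat \<Rightarrow> nat \<Rightarrow> nat \<Rightarrow> real) \<Rightarrow> bool" where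
  "IV_law n q \<longleftrightarrow> full_law n q \<and> rand_assign n q"

definition obs :: "nat \<Rightarrow> (nat \<Rightarrow> nat \<Rightarrow> nat \<Rightarrow> nat \<Rightarrow> nat \<Rightarrow> real) \<Rightarrow> nat \<Rightarrow> nat \<Rightarrow> nat \<Rightarrow> real" where
  "obs n q y dd z = (\<Sum>a<n. \<Sum>b<n. \<Sum>c<2. \<Sum>d<2.
      (if (if z = 0 then c else d) = dd \<and> (if dd = 0 then a else b) = y then q a b c d z else 0))"

definition pvec :: "nat \<Rightarrow> (nat \<Rightarrow> nat \<Rightarrow> nat \<Rightarrow> nat \<Rightarrow> nat \<Rightarrow> real) \<Rightarrow> nat \<Rightarrow> nat \<Rightarrow> nat \<Rightarrow> real" where
  "pvec n q y d z = obs n q y d z / pZ n q z"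

definition pbar :: "nat \<Rightarrow> (nat \<Rightarrow> nat \<Rightarrow> nat \<Rightarrow> nat \<Rightarrow> nat \<Rightarrow> real) \<Rightarrow> nat \<Rightarrow> nat \<Rightarrow> nat \<Rightarrow> real" where
  "pbar n q y d z = pvec n q y (1 - d) z"

definition ATE :: "nat \<Rightarrow> (nat \<Rightarrow> real) \<Rightarrow> (nat \<Rightarrow> nat \<Rightarrow> nat \<Rightarrow> nat \<Rightarrow> nat \<Rightarrow> real) \<Rightarrow> real" where
  "ATE n \<gamma> q = (\<Sum>a<n. \<Sum>b<n. \<Sum>c<2. \<Sum>d<2. \<Sum>z<2. q a b c d z * (\<gamma> b - \<gamma> a))"

definition ip :: "nat \<Rightarrow> (nat \<Rightarrow> nat \<Rightarrow> nat \<Rightarrow> real) \<Rightarrow> (nat \<Rightarrow> nat \<Rightarrow> nat \<Rightarrow> real) \<Rightarrow> real" where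
  "ip n v p = (\<Sum>y<n. \<Sum>d<2. \<Sum>z<2. v y d z * p y d z)"

text \<open>The sets S1, S2, S3 (B y d z stands for B_{ydz} in {0,1}).\<close>
definition S1 :: "nat \<Rightarrow> (nat \<Rightarrow> nat \<Rightarrow> nat \<Rightarrow> bool) \<Rightarrow> nat \<Rightarrow> bool" where
  "S1 n B t \<longleftrightarrow> t + 2 \<le> n \<and>
     (\<forall>i<n. t \<le> i \<longrightarrow> B i 0 0 \<and> B i 0 1) \<and>
     (\<forall>i<t. B i 0 0 \<noteq> B i 0 1) \<and>
     (\<forall>i<n. B i 1 0 \<noteq> B i 1 1) \<and>
     (\<exists>i<n. \<exists>j<n. B i 1 0 \<and> B j 1 1)"

definition S2 :: "nat \<Rightarrow> (nat \<Rightarrow> nat \<Rightarrow> nat \<Rightarrow> bool) \<Rightarrow> bool" where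
  "S2 n B \<longleftrightarrow> B (n - 1) 0 0 \<and> B (n - 1) 0 1 \<and> B 0 1 0 \<and> B 0 1 1 \<and>
     (\<forall>i. i < n - 1 \<longrightarrow> B i 0 0 \<noteq> B i 0 1) \<and>
     (\<forall>j. 0 < j \<and> j < n \<longrightarrow> B j 1 0 \<noteq> B j 1 1)"

definition S3 :: "nat \<Rightarrow> (nat \<Rightarrow> nat \<Rightarrow> nat \<Rightarrow> bool) \<Rightarrow> nat \<Rightarrow> bool" where
  "S3 n B t \<longleftrightarrow> 1 \<le> t \<and> t \<le> n - 1 \<and>
     (\<forall>i. i \<le> t \<longrightarrow> B i 1 0 \<and> B i 1 1) \<and>
     (\<forall>i. t < i \<and> i < n \<longrightarrow> B i 1 0 \<noteq> B i 1 1) \<and>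
     (\<forall>i<n. B i 0 0 \<noteq> B i 0 1) \<and>
     (\<exists>i<n. \<exists>j<n. B i 0 0 \<and> B j 0 1)"

definition uvec :: "(nat \<Rightarrow> real) \<Rightarrow> nat \<Rightarrow> real \<Rightarrow> (nat \<Rightarrow> nat \<Rightarrow> nat \<Rightarrow> bool) \<Rightarrow> nat \<Rightarrow> nat \<Rightarrow> nat \<Rightarrow> real" where
  "uvec \<gamma> n \<alpha> B i d z =
     (if \<not> i < n then 0
      else if d = 0 \<and> z = 0 then (if B i 0 0 then - \<gamma> i - \<alpha> else \<gamma> 0)
      else if d = 1 \<and> z = 0 then (if B i 1 0 then \<gamma> i else - \<gamma> (n - 1) - \<alpha>)
      else if d = 0 \<and> z = 1 then (if B i 0 1 then - \<gamma> i else \<gamma> 0 + \<alpha>)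
      else if d = 1 \<and> z = 1 then (if B i 1 1 then \<gamma> i + \<alpha> else - \<gamma> (n - 1))
      else 0)"

definition Vset :: "(nat \<Rightarrow> real) \<Rightarrow> nat \<Rightarrow> (nat \<Rightarrow> nat \<Rightarrow> nat \<Rightarrow> real) set" where
  "Vset \<gamma> n =
     {uvec \<gamma> n (- \<gamma> 0 - \<gamma> t) B | B t. S1 n B t} \<union>
     {uvec \<gamma> n (- \<gamma> 0 - \<gamma> (n - 1)) B | B. S2 n B} \<union>
     {uvec \<gamma> n (- \<gamma> t - \<gamma> (n - 1)) B | B t. S3 n B t}"

definition lower_bd :: "(nat \<Rightarrow> real) \<Rightarrow> nat \<Rightarrow> (nat \<Rightarrow> nat \<Rightarrow> nat \<Rightarrow> nat \<Rightarrow> nat \<Rightarrow> real) \<Rightarrow> real" where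
  "lower_bd \<gamma> n q = Max ((\<lambda>v. ip n v (pvec n q)) ` Vset \<gamma> n)"

definition upper_bd :: "(nat \<Rightarrow> real) \<Rightarrow> nat \<Rightarrow> (nat \<Rightarrow> nat \<Rightarrow> nat \<Rightarrow> nat \<Rightarrow> nat \<Rightarrow> real) \<Rightarrow> real" where
  "upper_bd \<gamma> n q = - Max ((\<lambda>v. ip n v (pbar n q)) ` Vset \<gamma> n)"

end

theory Submission
  imports Defs
begin

(* Write a full data law as p times the law of Z, where p is the law of the response type
   (Y0, Y1, D0, D1).  The observed vector is linear in p, and v^T p is the p-expectation of the
   weight v puts on the two observations (one for each value of Z) that a response type produces.
   Every v in V puts weight at most gamma b - gamma a on a type with potential outcomes gamma a and
   gamma b, so v^T p <= ATE.  For sharpness, every observed law comes from a response-type law on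
   whose support some v in V is tight: never-takers and always-takers get the extreme missing
   outcomes, compliers and defiers get independent potential outcomes, and the outcome marginals
   of compliers and defiers are filled greedily along the outcome order; the threshold of the fill
   determines v.  Exchanging the treatment labels negates the ATE and turns the lower bound into
   the upper bound. *)

lemma sum_lessThan_2: "(\<Sum>i<(2::nat). f i) = f 0 + f 1"
  by (simp add: numeral_2_eq_2)

lemma strict_mono_on_lessThan_leD:
  fixes \<gamma> :: "nat \<Rightarrow> real"
  shows "strict_mono_on {..<n} \<gamma> \<Longrightarrow> i \<le> j \<Longrightarrow> j < n \<Longrightarrow> \<gamma> i \<le> \<gamma> j"
  by (rule strict_mono_on_leD) auto

lemma strict_mono_on_lessThan_le_last:
  fixes \<gamma> :: "nat \<Rightarrow> real"
  shows "strict_mono_on {..<n} \<gamma> \<Longrightarrow> i < n \<Longrightarrow> \<gamma> i \<le> \<gamma> (n - 1)"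
  by (rule strict_mono_on_leD) auto

lemma ex_nonzero_if_sum_eq_pos:
  fixes f h :: "nat \<Rightarrow> real"
  assumes "\<forall>y<n. 0 \<le> f y" "t < n" "0 < f t" "sum h {..<n} = sum f {..<n}"
  shows "\<exists>i<n. h i \<noteq> 0"
proof -
  have "sum h {..<n} \<noteq> 0" using assms sum_pos2[of "{..<n}" t f] by auto
  then show ?thesis using sum.not_neutral_contains_not_neutral by blast
qed

lemma indep_coupling_marginals:
  fixes f g :: "nat \<Rightarrow> real"
  assumes f: "\<forall>y<n. 0 \<le> f y" and g: "\<forall>y<n. 0 \<le> g y" and eq: "sum f {..<n} = sum g {..<n}"
  shows "a < n \<Longrightarrow> (\<Sum>b<n. f a * g b / sum g {..<n}) = f a"
    and "b < n \<Longrightarrow> (\<Sum>a<n. f a * g b / sum g {..<n}) = g b"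
proof -
  have zero: "sum g {..<n} = 0 \<Longrightarrow> y < n \<Longrightarrow> f y = 0 \<and> g y = 0" for y
    using f g eq sum_nonneg_eq_0_iff[of "{..<n}" f] sum_nonneg_eq_0_iff[of "{..<n}" g] by auto
  show "a < n \<Longrightarrow> (\<Sum>b<n. f a * g b / sum g {..<n}) = f a"
    using zero by (cases "sum g {..<n} = 0") (simp_all flip: sum_divide_distrib sum_distrib_left)
  show "b < n \<Longrightarrow> (\<Sum>a<n. f a * g b / sum g {..<n}) = g b"
    using zero eq by (cases "sum g {..<n} = 0") (simp_all flip: sum_divide_distrib sum_distrib_right)
qed

lemma greedy_fill:
  fixes x :: "nat \<Rightarrow> real"
  assumes "0 < n" "\<forall>y<n. 0 \<le> x y" "0 \<le> R" "R \<le> sum x {..<n}"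
  obtains g t where "t < n" "\<forall>y<n. 0 \<le> g y \<and> g y \<le> x y" "sum g {..<n} = R"
    "\<forall>y<t. g y = x y" "\<forall>y<n. t < y \<longrightarrow> g y = 0" "0 < t \<longrightarrow> 0 < g t"
proof -
  have "\<exists>g t. t < n \<and> (\<forall>y<n. 0 \<le> g y \<and> g y \<le> x y) \<and> sum g {..<n} = R \<and>
      (\<forall>y<t. g y = x y) \<and> (\<forall>y<n. t < y \<longrightarrow> g y = 0) \<and> (0 < t \<longrightarrow> 0 < g t)"
    using assms
  proof (induction n arbitrary: R)
    case 0
    then show ?case by simp
  next
    case (Suc k)
    show ?case
    proof (cases "0 < k \<and> R \<le> sum x {..<k}")
      case True
      then obtain g t where "t < k" "\<forall>y<k. 0 \<le> g y \<and> g y \<le> x y" "sum g {..<k} = R"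
        "\<forall>y<t. g y = x y" "\<forall>y<k. t < y \<longrightarrow> g y = 0" "0 < t \<longrightarrow> 0 < g t"
        using Suc.IH[of R] Suc.prems by auto
      moreover have "sum (g(k := 0)) {..<k} = sum g {..<k}" by (intro sum.cong) auto
      ultimately show ?thesis
        using Suc.prems by (intro exI[of _ "g(k := 0)"] exI[of _ t]) (auto simp: less_Suc_eq)
    next
      case False
      then have R: "sum x {..<k} \<le> R" "0 < k \<longrightarrow> sum x {..<k} < R"
        using Suc.prems by (cases "k = 0"; auto)+
      define g where "g y = (if y < k then x y else R - sum x {..<k})" for y
      have "sum g {..<k} = sum x {..<k}" unfolding g_def by (intro sum.cong) auto
      then show ?thesis
        using Suc.prems R by (intro exI[of _ g] exI[of _ k]) (auto simp: less_Suc_eq g_def)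
    qed
  qed
  then show ?thesis using that by blast
qed

lemma greedy_fill_down:
  fixes x :: "nat \<Rightarrow> real"
  assumes n: "0 < n" and x: "\<forall>y<n. 0 \<le> x y" and R: "0 \<le> R" "R \<le> sum x {..<n}"
  obtains g t where "t < n" "\<forall>y<n. 0 \<le> g y \<and> g y \<le> x y" "sum g {..<n} = R"
    "\<forall>y<n. t < y \<longrightarrow> g y = x y" "\<forall>y<t. g y = 0" "t < n - 1 \<longrightarrow> 0 < g t"
proof -
  let ?rev = "\<lambda>y. n - Suc y"
  have "\<forall>y<n. 0 \<le> (x \<circ> ?rev) y" using x by simp
  moreover have "R \<le> sum (x \<circ> ?rev) {..<n}"
    using R(2) sum.nat_diff_reindex[of x n] by (simp add: comp_def)
  ultimately obtain g t where gt: "t < n" "\<forall>y<n. 0 \<le> g y \<and> g y \<le> (x \<circ> ?rev) y"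
    "sum g {..<n} = R" "\<forall>y<t. g y = (x \<circ> ?rev) y" "\<forall>y<n. t < y \<longrightarrow> g y = 0" "0 < t \<longrightarrow> 0 < g t"
    using greedy_fill[OF n _ R(1)] by blast
  have "sum (g \<circ> ?rev) {..<n} = R"
    using gt(3) sum.nat_diff_reindex[of g n] by (simp add: comp_def)
  moreover have "0 \<le> g (?rev y) \<and> g (?rev y) \<le> x y" if "y < n" for y
    using gt(2)[rule_format, of "?rev y"] that by simp
  moreover have "g (?rev y) = x y" if "y < n" "?rev t < y" for y
    using gt(4)[rule_format, of "?rev y"] that by simp
  moreover have "g (?rev y) = 0" if "y < ?rev t" for y
    using gt(5)[rule_format, of "?rev y"] that by simp
  moreover have "0 < g (?rev (?rev t))" if "?rev t < n - 1"
    using gt(1,6) that by simp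
  ultimately show ?thesis
    using that[of "?rev t" "g \<circ> ?rev"] gt(1) by simp
qed

section \<open>Response-type laws\<close>

(* p a b c d = P(Y0 = gamma a, Y1 = gamma b, D0 = c, D1 = d), the law of the response type;
   an IV law is such a law times an independent law of Z. *)
definition resp_law :: "nat \<Rightarrow> (nat \<Rightarrow> nat \<Rightarrow> nat \<Rightarrow> nat \<Rightarrow> real) \<Rightarrow> bool" where
  "resp_law n p \<longleftrightarrow>
     (\<forall>a b c d. 0 \<le> p a b c d) \<and>
     (\<forall>a b c d. \<not> (a < n \<and> b < n \<and> c < 2 \<and> d < 2) \<longrightarrow> p a b c d = 0) \<and>
     (\<Sum>a<n. \<Sum>b<n. \<Sum>c<2. \<Sum>d<2. p a b c d) = 1"

definition instr_law :: "(nat \<Rightarrow> real) \<Rightarrow> bool" where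
  "instr_law w \<longleftrightarrow> (\<forall>z. 0 \<le> w z) \<and> (\<forall>z\<ge>2. w z = 0) \<and> w 0 + w 1 = 1"

definition resp_of ::
    "(nat \<Rightarrow> nat \<Rightarrow> nat \<Rightarrow> nat \<Rightarrow> nat \<Rightarrow> real) \<Rightarrow> nat \<Rightarrow> nat \<Rightarrow> nat \<Rightarrow> nat \<Rightarrow> real" where
  "resp_of q a b c d = (\<Sum>z<2. q a b c d z)"

definition prod_law :: "(nat \<Rightarrow> nat \<Rightarrow> nat \<Rightarrow> nat \<Rightarrow> real) \<Rightarrow> (nat \<Rightarrow> real) \<Rightarrow>
    nat \<Rightarrow> nat \<Rightarrow> nat \<Rightarrow> nat \<Rightarrow> nat \<Rightarrow> real" where
  "prod_law p w a b c d z = p a b c d * w z"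

definition resp_obs :: "nat \<Rightarrow> (nat \<Rightarrow> nat \<Rightarrow> nat \<Rightarrow> nat \<Rightarrow> real) \<Rightarrow> nat \<Rightarrow> nat \<Rightarrow> nat \<Rightarrow> real" where
  "resp_obs n p y dd z = (\<Sum>a<n. \<Sum>b<n. \<Sum>c<2. \<Sum>d<2.
      (if (if z = 0 then c else d) = dd \<and> (if dd = 0 then a else b) = y then p a b c d else 0))"

definition resp_ATE :: "nat \<Rightarrow> (nat \<Rightarrow> real) \<Rightarrow> (nat \<Rightarrow> nat \<Rightarrow> nat \<Rightarrow> nat \<Rightarrow> real) \<Rightarrow> real" where
  "resp_ATE n \<gamma> p = (\<Sum>a<n. \<Sum>b<n. \<Sum>c<2. \<Sum>d<2. p a b c d * (\<gamma> b - \<gamma> a))"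

lemma resp_law_pos: "resp_law n p \<Longrightarrow> 0 < n"
  unfolding resp_law_def by (cases n) auto

lemma IV_law_eq_prod_law: "IV_law n q \<Longrightarrow> q = prod_law (resp_of q) (pZ n q)"
  unfolding IV_law_def rand_assign_def prod_law_def resp_of_def by (intro ext) blast

lemma resp_law_resp_of: "IV_law n q \<Longrightarrow> resp_law n (resp_of q)"
  unfolding IV_law_def full_law_def resp_law_def resp_of_def by (auto intro: sum_nonneg)

lemma instr_law_pZ:
  assumes "IV_law n q"
  shows "instr_law (pZ n q)"
proof -
  have q: "full_law n q" using assms unfolding IV_law_def by blast
  have "pZ n q 0 + pZ n q 1 = (\<Sum>a<n. \<Sum>b<n. \<Sum>c<2. \<Sum>d<2. \<Sum>z<2. q a b c d z)"
    unfolding pZ_def sum_lessThan_2 by (simp add: sum.distrib)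
  then show ?thesis
    using q unfolding instr_law_def full_law_def pZ_def by (auto intro!: sum_nonneg)
qed

lemma pZ_prod_law: "resp_law n p \<Longrightarrow> pZ n (prod_law p w) = w"
  unfolding resp_law_def pZ_def prod_law_def by (simp flip: sum_distrib_right)

lemma resp_of_prod_law: "instr_law w \<Longrightarrow> resp_of (prod_law p w) = p"
  unfolding instr_law_def resp_of_def prod_law_def sum_lessThan_2 by (simp flip: distrib_left)

lemma IV_law_prod_law:
  assumes p: "resp_law n p" and w: "instr_law w"
  shows "IV_law n (prod_law p w)"
proof -
  have marg: "(\<Sum>z<2. prod_law p w a b c d z) = p a b c d" for a b c d
    using resp_of_prod_law[OF w, of p] unfolding resp_of_def by (metis (no_types))
  show ?thesis
    using p w unfolding IV_law_def full_law_def rand_assign_def pZ_prod_law[OF p] marg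
    by (auto simp: resp_law_def instr_law_def prod_law_def)
qed

lemma obs_prod_law: "obs n (prod_law p w) y d z = w z * resp_obs n p y d z"
  unfolding obs_def resp_obs_def prod_law_def sum_distrib_left
  by (intro sum.cong refl) simp

lemma ATE_eq_resp_ATE: "ATE n \<gamma> q = resp_ATE n \<gamma> (resp_of q)"
  unfolding ATE_def resp_ATE_def resp_of_def sum_lessThan_2 by (simp add: algebra_simps)

lemma pvec_eq_resp_obs:
  assumes "IV_law n q" "0 < pZ n q z"
  shows "pvec n q y d z = resp_obs n (resp_of q) y d z"
  using assms obs_prod_law[of n "resp_of q" "pZ n q" y d z]
  unfolding pvec_def by (simp flip: IV_law_eq_prod_law)

lemma IV_law_replace_resp:
  assumes q: "IV_law n q" and p: "resp_law n p" and obs: "resp_obs n p = resp_obs n (resp_of q)"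
  shows "IV_law n (prod_law p (pZ n q))" "obs n (prod_law p (pZ n q)) = obs n q"
    "ATE n \<gamma> (prod_law p (pZ n q)) = resp_ATE n \<gamma> p"
proof -
  have w: "instr_law (pZ n q)" by (rule instr_law_pZ[OF q])
  show "IV_law n (prod_law p (pZ n q))" by (rule IV_law_prod_law[OF p w])
  have "obs n (prod_law p (pZ n q)) = obs n (prod_law (resp_of q) (pZ n q))"
    unfolding obs_prod_law[abs_def] obs ..
  then show "obs n (prod_law p (pZ n q)) = obs n q"
    by (simp flip: IV_law_eq_prod_law[OF q])
  show "ATE n \<gamma> (prod_law p (pZ n q)) = resp_ATE n \<gamma> p"
    unfolding ATE_eq_resp_ATE resp_of_prod_law[OF w] ..
qed

(* These and uvec_simps mention the numeral 1, which the simplifier would first rewrite to Suc 0;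
   hence the recurring del: One_nat_def. *)
lemma resp_obs_simps:
  assumes "y < n"
  shows "resp_obs n p y 0 0 = (\<Sum>b<n. p y b 0 0 + p y b 0 1)"
    "resp_obs n p y 1 0 = (\<Sum>a<n. p a y 1 0 + p a y 1 1)"
    "resp_obs n p y 0 1 = (\<Sum>b<n. p y b 0 0 + p y b 1 0)"
    "resp_obs n p y 1 1 = (\<Sum>a<n. p a y 0 1 + p a y 1 1)"
  using assms unfolding resp_obs_def sum_lessThan_2
  by (subst sum.swap; simp add: sum.distrib)+

lemma resp_obs_eqI:
  assumes "\<forall>y<n. \<forall>d<2. \<forall>z<2. resp_obs n p y d z = resp_obs n p' y d z"
  shows "resp_obs n p = resp_obs n p'"
proof (intro ext)
  fix y d z
  have z: "resp_obs n r y d z = resp_obs n r y d (if z = 0 then 0 else 1)" for r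
    unfolding resp_obs_def by simp
  have out: "resp_obs n r y d z = 0" if "\<not> (y < n \<and> d < 2)" for r
    using that unfolding resp_obs_def by (intro sum.neutral ballI) auto
  show "resp_obs n p y d z = resp_obs n p' y d z"
    using assms out z[of p] z[of p'] by (cases "y < n \<and> d < 2") auto
qed

lemma resp_obs_total:
  assumes "z < 2"
  shows "(\<Sum>y<n. resp_obs n p y 0 z + resp_obs n p y 1 z) = (\<Sum>a<n. \<Sum>b<n. \<Sum>c<2. \<Sum>d<2. p a b c d)"
proof -
  have swap: "(\<Sum>y<n. \<Sum>a<n. p a y c d) = (\<Sum>a<n. \<Sum>b<n. p a b c d)" for c d
    by (rule sum.swap)
  from assms consider "z = 0" | "z = 1" by linarith
  then show ?thesis
    by cases (simp_all add: resp_obs_simps sum.distrib sum_lessThan_2 swap del: One_nat_def)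
qed

(* The response type (a, b, c, d) is observed as D = c with Y = gamma (if c = 0 then a else b)
   under Z = 0, and as D = d with Y = gamma (if d = 0 then a else b) under Z = 1. *)
definition type_weight :: "(nat \<Rightarrow> nat \<Rightarrow> nat \<Rightarrow> real) \<Rightarrow> nat \<Rightarrow> nat \<Rightarrow> nat \<Rightarrow> nat \<Rightarrow> real" where
  "type_weight v a b c d = v (if c = 0 then a else b) c 0 + v (if d = 0 then a else b) d 1"

lemma ip_resp_obs:
  "ip n v (resp_obs n p) = (\<Sum>a<n. \<Sum>b<n. \<Sum>c<2. \<Sum>d<2. p a b c d * type_weight v a b c d)"
proof -
  have by_a: "(\<Sum>y<n. v y e z * (\<Sum>b<n. p y b c d)) = (\<Sum>a<n. \<Sum>b<n. v a e z * p a b c d)"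
    for e z c d by (simp add: sum_distrib_left)
  have by_b: "(\<Sum>y<n. v y e z * (\<Sum>a<n. p a y c d)) = (\<Sum>a<n. \<Sum>b<n. v b e z * p a b c d)"
    for e z c d by (subst sum.swap) (simp add: sum_distrib_left)
  have "ip n v (resp_obs n p) = (\<Sum>y<n. v y 0 0 * resp_obs n p y 0 0 + v y 0 1 * resp_obs n p y 0 1
      + v y 1 0 * resp_obs n p y 1 0 + v y 1 1 * resp_obs n p y 1 1)"
    unfolding ip_def sum_lessThan_2 by (simp add: algebra_simps del: One_nat_def)
  also have "\<dots> = (\<Sum>a<n. \<Sum>b<n. \<Sum>c<2. \<Sum>d<2. p a b c d * type_weight v a b c d)"
    by (simp add: resp_obs_simps sum.distrib by_a by_b type_weight_def sum_lessThan_2 algebra_simps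
        del: One_nat_def)
  finally show ?thesis .
qed

definition tight_on_support ::
    "nat \<Rightarrow> (nat \<Rightarrow> real) \<Rightarrow> (nat \<Rightarrow> nat \<Rightarrow> nat \<Rightarrow> nat \<Rightarrow> real) \<Rightarrow> (nat \<Rightarrow> nat \<Rightarrow> nat \<Rightarrow> real) \<Rightarrow> bool" where
  "tight_on_support n \<gamma> p v \<longleftrightarrow>
     (\<forall>a<n. \<forall>b<n. \<forall>c<2. \<forall>d<2. p a b c d \<noteq> 0 \<longrightarrow> type_weight v a b c d = \<gamma> b - \<gamma> a)"

lemma ip_resp_obs_le_resp_ATE:
  assumes "\<And>a b c d. 0 \<le> p a b c d"
    and "\<And>a b c d. a < n \<Longrightarrow> b < n \<Longrightarrow> c < 2 \<Longrightarrow> d < 2 \<Longrightarrow> type_weight v a b c d \<le> \<gamma> b - \<gamma> a"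
  shows "ip n v (resp_obs n p) \<le> resp_ATE n \<gamma> p"
  unfolding ip_resp_obs resp_ATE_def using assms by (intro sum_mono mult_left_mono) auto

lemma ip_resp_obs_eq_resp_ATE:
  assumes "tight_on_support n \<gamma> p v"
  shows "ip n v (resp_obs n p) = resp_ATE n \<gamma> p"
  unfolding ip_resp_obs resp_ATE_def using assms unfolding tight_on_support_def
  by (intro sum.cong refl) (metis lessThan_iff mult_zero_left)

section \<open>The vectors of V\<close>

lemma uvec_simps:
  assumes "i < n"
  shows "uvec \<gamma> n \<alpha> B i 0 0 = (if B i 0 0 then - \<gamma> i - \<alpha> else \<gamma> 0)"
    "uvec \<gamma> n \<alpha> B i 1 0 = (if B i 1 0 then \<gamma> i else - \<gamma> (n - 1) - \<alpha>)"
    "uvec \<gamma> n \<alpha> B i 0 1 = (if B i 0 1 then - \<gamma> i else \<gamma> 0 + \<alpha>)"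
    "uvec \<gamma> n \<alpha> B i 1 1 = (if B i 1 1 then \<gamma> i + \<alpha> else - \<gamma> (n - 1))"
  using assms unfolding uvec_def by auto

lemma uvec_cong:
  assumes "\<forall>i<n. \<forall>d<2. \<forall>z<2. B i d z = B' i d z"
  shows "uvec \<gamma> n \<alpha> B = uvec \<gamma> n \<alpha> B'"
  using assms unfolding uvec_def by (intro ext) auto

(* The inequalities type_weight (uvec \<gamma> n \<alpha> B) a b c d \<le> \<gamma> b - \<gamma> a in their worst cases
   b = 0 and a = n - 1. *)
definition uvec_admissible :: "(nat \<Rightarrow> real) \<Rightarrow> nat \<Rightarrow> real \<Rightarrow> (nat \<Rightarrow> nat \<Rightarrow> nat \<Rightarrow> bool) \<Rightarrow> bool" where
  "uvec_admissible \<gamma> n \<alpha> B \<longleftrightarrow>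
     (\<forall>i<n. B i 0 0 \<and> B i 0 1 \<longrightarrow> - \<alpha> \<le> \<gamma> 0 + \<gamma> i) \<and>
     (\<forall>i<n. \<not> (B i 0 0 \<and> B i 0 1) \<longrightarrow> \<alpha> \<le> - \<gamma> 0 - \<gamma> i) \<and>
     (\<forall>i<n. B i 1 0 \<and> B i 1 1 \<longrightarrow> \<alpha> \<le> - \<gamma> i - \<gamma> (n - 1)) \<and>
     (\<forall>i<n. \<not> (B i 1 0 \<and> B i 1 1) \<longrightarrow> - \<alpha> \<le> \<gamma> i + \<gamma> (n - 1))"

lemma type_weight_uvec_le:
  fixes \<gamma> :: "nat \<Rightarrow> real"
  assumes mono: "strict_mono_on {..<n} \<gamma>" and adm: "uvec_admissible \<gamma> n \<alpha> B"
    and ab: "a < n" "b < n" and cd: "c < 2" "d < 2"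
  shows "type_weight (uvec \<gamma> n \<alpha> B) a b c d \<le> \<gamma> b - \<gamma> a"
proof -
  have "\<gamma> 0 \<le> \<gamma> b" "\<gamma> a \<le> \<gamma> (n - 1)"
    using strict_mono_on_lessThan_leD[OF mono] strict_mono_on_lessThan_le_last[OF mono] ab by auto
  moreover have "B a 0 0 \<and> B a 0 1 \<longrightarrow> - \<alpha> \<le> \<gamma> 0 + \<gamma> a"
      "\<not> (B a 0 0 \<and> B a 0 1) \<longrightarrow> \<alpha> \<le> - \<gamma> 0 - \<gamma> a"
      "B b 1 0 \<and> B b 1 1 \<longrightarrow> \<alpha> \<le> - \<gamma> b - \<gamma> (n - 1)"
      "\<not> (B b 1 0 \<and> B b 1 1) \<longrightarrow> - \<alpha> \<le> \<gamma> b + \<gamma> (n - 1)"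
    using adm ab unfolding uvec_admissible_def by auto
  moreover have "c = 0 \<or> c = 1" "d = 0 \<or> d = 1" using cd by auto
  ultimately show ?thesis
    using ab by (auto simp: type_weight_def uvec_simps simp del: One_nat_def split: if_splits)
qed

lemma uvec_admissible_S1:
  fixes \<gamma> :: "nat \<Rightarrow> real"
  assumes mono: "strict_mono_on {..<n} \<gamma>" and S: "S1 n B t"
  shows "uvec_admissible \<gamma> n (- \<gamma> 0 - \<gamma> t) B"
  unfolding uvec_admissible_def
proof (intro conjI allI impI)
  note le = strict_mono_on_lessThan_leD[OF mono]
  have t: "t < n" using S by (simp add: S1_def)
  fix i assume i: "i < n"
  show "- (- \<gamma> 0 - \<gamma> t) \<le> \<gamma> 0 + \<gamma> i" if "B i 0 0 \<and> B i 0 1"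
  proof -
    have "t \<le> i" using S i that unfolding S1_def by (metis not_le)
    then show ?thesis using le[of t i] i by simp
  qed
  show "- \<gamma> 0 - \<gamma> t \<le> - \<gamma> 0 - \<gamma> i" if "\<not> (B i 0 0 \<and> B i 0 1)"
  proof -
    have "i < t" using S i that unfolding S1_def by (metis not_le)
    then show ?thesis using le[of i t] t by simp
  qed
  show "- \<gamma> 0 - \<gamma> t \<le> - \<gamma> i - \<gamma> (n - 1)" if "B i 1 0 \<and> B i 1 1"
    using S i that unfolding S1_def by auto
  show "- (- \<gamma> 0 - \<gamma> t) \<le> \<gamma> i + \<gamma> (n - 1)"
    using le[of 0 i] strict_mono_on_lessThan_le_last[OF mono t] i by simp
qed

lemma uvec_admissible_S2:
  fixes \<gamma> :: "nat \<Rightarrow> real"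
  assumes mono: "strict_mono_on {..<n} \<gamma>" and S: "S2 n B"
  shows "uvec_admissible \<gamma> n (- \<gamma> 0 - \<gamma> (n - 1)) B"
  unfolding uvec_admissible_def
proof (intro conjI allI impI)
  note le = strict_mono_on_lessThan_leD[OF mono]
  fix i assume i: "i < n"
  show "- (- \<gamma> 0 - \<gamma> (n - 1)) \<le> \<gamma> 0 + \<gamma> i" if "B i 0 0 \<and> B i 0 1"
  proof -
    have "\<not> i < n - 1" using S that unfolding S2_def by auto
    with i have "i = n - 1" by linarith
    then show ?thesis by simp
  qed
  show "- \<gamma> 0 - \<gamma> (n - 1) \<le> - \<gamma> 0 - \<gamma> i"
    using strict_mono_on_lessThan_le_last[OF mono i] by simp
  show "- \<gamma> 0 - \<gamma> (n - 1) \<le> - \<gamma> i - \<gamma> (n - 1)" if "B i 1 0 \<and> B i 1 1"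
  proof -
    have "i = 0" using S i that unfolding S2_def by auto
    then show ?thesis by simp
  qed
  show "- (- \<gamma> 0 - \<gamma> (n - 1)) \<le> \<gamma> i + \<gamma> (n - 1)"
    using le[of 0 i] i by simp
qed

lemma uvec_admissible_S3:
  fixes \<gamma> :: "nat \<Rightarrow> real"
  assumes mono: "strict_mono_on {..<n} \<gamma>" and S: "S3 n B t"
  shows "uvec_admissible \<gamma> n (- \<gamma> t - \<gamma> (n - 1)) B"
  unfolding uvec_admissible_def
proof (intro conjI allI impI)
  note le = strict_mono_on_lessThan_leD[OF mono]
  have t: "t < n" using S by (auto simp: S3_def)
  fix i assume i: "i < n"
  show "- (- \<gamma> t - \<gamma> (n - 1)) \<le> \<gamma> 0 + \<gamma> i" if "B i 0 0 \<and> B i 0 1"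
    using S i that unfolding S3_def by auto
  show "- \<gamma> t - \<gamma> (n - 1) \<le> - \<gamma> 0 - \<gamma> i"
    using le[of 0 t] strict_mono_on_lessThan_le_last[OF mono i] t by simp
  show "- \<gamma> t - \<gamma> (n - 1) \<le> - \<gamma> i - \<gamma> (n - 1)" if "B i 1 0 \<and> B i 1 1"
  proof -
    have "i \<le> t" using S i that unfolding S3_def by (metis not_le)
    then show ?thesis using le[of i t] t by simp
  qed
  show "- (- \<gamma> t - \<gamma> (n - 1)) \<le> \<gamma> i + \<gamma> (n - 1)" if "\<not> (B i 1 0 \<and> B i 1 1)"
  proof -
    have "t < i" using S i that unfolding S3_def by (metis not_le)
    then show ?thesis using le[of t i] i by simp
  qed
qed

lemma Vset_type_weight_le:
  fixes \<gamma> :: "nat \<Rightarrow> real"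
  assumes mono: "strict_mono_on {..<n} \<gamma>" and v: "v \<in> Vset \<gamma> n"
    and "a < n" "b < n" "c < 2" "d < 2"
  shows "type_weight v a b c d \<le> \<gamma> b - \<gamma> a"
proof -
  from v obtain \<alpha> B where "v = uvec \<gamma> n \<alpha> B" "uvec_admissible \<gamma> n \<alpha> B"
    unfolding Vset_def
    using uvec_admissible_S1[OF mono] uvec_admissible_S2[OF mono] uvec_admissible_S3[OF mono] by blast
  then show ?thesis using type_weight_uvec_le[OF mono] assms by blast
qed

lemma finite_Vset: "finite (Vset \<gamma> n)"
proof -
  let ?D = "{..<n} \<times> {..<2::nat} \<times> {..<2::nat}"
  let ?A = "(\<lambda>t. - \<gamma> 0 - \<gamma> t) ` {..n} \<union> (\<lambda>t. - \<gamma> t - \<gamma> (n - 1)) ` {..n}"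
  let ?u = "\<lambda>(\<alpha>, S). uvec \<gamma> n \<alpha> (\<lambda>i d z. (i, d, z) \<in> S)"
  have restrict: "uvec \<gamma> n \<alpha> B = ?u (\<alpha>, {x \<in> ?D. case x of (i, d, z) \<Rightarrow> B i d z})" for \<alpha> B
    by (simp add: uvec_cong)
  have "Vset \<gamma> n \<subseteq> ?u ` (?A \<times> Pow ?D)"
  proof
    fix v assume "v \<in> Vset \<gamma> n"
    then obtain \<alpha> B where "v = uvec \<gamma> n \<alpha> B" "\<alpha> \<in> ?A"
      unfolding Vset_def S1_def S3_def by fastforce
    then show "v \<in> ?u ` (?A \<times> Pow ?D)"
      using restrict by blast
  qed
  then show ?thesis by (rule finite_subset) simp
qed

lemma Vset_nonempty: "0 < n \<Longrightarrow> Vset \<gamma> n \<noteq> {}"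
proof -
  assume "0 < n"
  then have "S2 n (\<lambda>i d z. if d = 0 then z = 0 \<or> i = n - 1 else z = 0 \<or> i = 0)"
    unfolding S2_def by auto
  then show ?thesis unfolding Vset_def by blast
qed

definition resp_lower :: "(nat \<Rightarrow> real) \<Rightarrow> nat \<Rightarrow> (nat \<Rightarrow> nat \<Rightarrow> nat \<Rightarrow> nat \<Rightarrow> real) \<Rightarrow> real" where
  "resp_lower \<gamma> n p = Max ((\<lambda>v. ip n v (resp_obs n p)) ` Vset \<gamma> n)"

lemma ip_le_resp_lower: "v \<in> Vset \<gamma> n \<Longrightarrow> ip n v (resp_obs n p) \<le> resp_lower \<gamma> n p"
  unfolding resp_lower_def by (intro Max_ge) (auto simp: finite_Vset)

lemma resp_lower_le_resp_ATE:
  fixes \<gamma> :: "nat \<Rightarrow> real"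
  assumes mono: "strict_mono_on {..<n} \<gamma>" and p: "resp_law n p"
  shows "resp_lower \<gamma> n p \<le> resp_ATE n \<gamma> p"
proof -
  have "ip n v (resp_obs n p) \<le> resp_ATE n \<gamma> p" if "v \<in> Vset \<gamma> n" for v
    using p Vset_type_weight_le[OF mono that] unfolding resp_law_def
    by (intro ip_resp_obs_le_resp_ATE) auto
  then show ?thesis
    unfolding resp_lower_def using finite_Vset Vset_nonempty[OF resp_law_pos[OF p]]
    by (simp add: Max_le_iff)
qed

lemma ip_cong:
  assumes "\<forall>y<n. \<forall>d<2. \<forall>z<2. p y d z = p' y d z"
  shows "ip n v p = ip n v p'"
  using assms unfolding ip_def by (intro sum.cong refl) auto

lemma lower_bd_eq_resp_lower:
  assumes "IV_law n q" "\<forall>z<2. 0 < pZ n q z"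
  shows "lower_bd \<gamma> n q = resp_lower \<gamma> n (resp_of q)"
proof -
  have "ip n v (pvec n q) = ip n v (resp_obs n (resp_of q))" for v
    using assms by (intro ip_cong) (simp add: pvec_eq_resp_obs)
  then show ?thesis unfolding lower_bd_def resp_lower_def by simp
qed

section \<open>Exchanging the treatment labels\<close>

definition resp_swap :: "(nat \<Rightarrow> nat \<Rightarrow> nat \<Rightarrow> nat \<Rightarrow> real) \<Rightarrow> nat \<Rightarrow> nat \<Rightarrow> nat \<Rightarrow> nat \<Rightarrow> real" where
  "resp_swap p a b c d = (if c < 2 \<and> d < 2 then p b a (1 - c) (1 - d) else 0)"

lemma sum_resp_swap:
  "(\<Sum>a<n. \<Sum>b<n. \<Sum>c<2. \<Sum>d<2. resp_swap p a b c d * f a b) =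
   (\<Sum>a<n. \<Sum>b<n. \<Sum>c<2. \<Sum>d<2. p a b c d * f b a)"
  unfolding resp_swap_def sum_lessThan_2 by (subst sum.swap) (simp add: algebra_simps)

lemma resp_law_swap: "resp_law n p \<Longrightarrow> resp_law n (resp_swap p)"
  using sum_resp_swap[where f = "\<lambda>_ _. 1"] unfolding resp_law_def
  by (auto simp: resp_swap_def)

lemma resp_ATE_swap: "resp_ATE n \<gamma> (resp_swap p) = - resp_ATE n \<gamma> p"
  unfolding resp_ATE_def sum_resp_swap by (simp flip: sum_negf mult_minus_right)

lemma resp_obs_swap:
  assumes "y < n" "d < 2" "z < 2"
  shows "resp_obs n (resp_swap p) y d z = resp_obs n p y (1 - d) z"
proof -
  from assms consider "d = 0" "z = 0" | "d = 0" "z = 1" | "d = 1" "z = 0" | "d = 1" "z = 1"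
    by linarith
  then show ?thesis
    by cases (simp_all add: resp_obs_simps[OF \<open>y < n\<close>] resp_swap_def add.commute del: One_nat_def)
qed

lemma upper_bd_eq_resp_lower_swap:
  assumes "IV_law n q" "\<forall>z<2. 0 < pZ n q z"
  shows "upper_bd \<gamma> n q = - resp_lower \<gamma> n (resp_swap (resp_of q))"
proof -
  have "ip n v (pbar n q) = ip n v (resp_obs n (resp_swap (resp_of q)))" for v
    using assms by (intro ip_cong) (simp add: pbar_def pvec_eq_resp_obs resp_obs_swap)
  then show ?thesis unfolding upper_bd_def resp_lower_def by simp
qed

section \<open>A coupling on whose support a vector of V is tight\<close>

(* Never-takers get Y1 = gamma 0 and always-takers Y0 = gamma (n - 1), the missing outcomes least
   favourable to the ATE; compliers and defiers get independent potential outcomes. *)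
definition coupling :: "nat \<Rightarrow> (nat \<Rightarrow> real) \<Rightarrow> (nat \<Rightarrow> real) \<Rightarrow> (nat \<Rightarrow> real) \<Rightarrow> (nat \<Rightarrow> real) \<Rightarrow>
    (nat \<Rightarrow> real) \<Rightarrow> (nat \<Rightarrow> real) \<Rightarrow> nat \<Rightarrow> nat \<Rightarrow> nat \<Rightarrow> nat \<Rightarrow> real" where
  "coupling n nt at c0 c1 d0 d1 a b c d =
     (if a < n \<and> b < n then
        if c = 0 \<and> d = 0 then (if b = 0 then nt a else 0)
        else if c = 0 \<and> d = 1 then c0 a * c1 b / sum c1 {..<n}
        else if c = 1 \<and> d = 0 then d0 a * d1 b / sum d1 {..<n}
        else if c = 1 \<and> d = 1 then (if a = n - 1 then at b else 0)
        else 0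
      else 0)"

lemma resp_obs_coupling:
  fixes nt at c0 c1 d0 d1 :: "nat \<Rightarrow> real"
  assumes n: "0 < n" and y: "y < n"
    and nonneg: "\<forall>y<n. 0 \<le> c0 y \<and> 0 \<le> c1 y \<and> 0 \<le> d0 y \<and> 0 \<le> d1 y"
    and c: "sum c0 {..<n} = sum c1 {..<n}" and d: "sum d0 {..<n} = sum d1 {..<n}"
  shows "resp_obs n (coupling n nt at c0 c1 d0 d1) y 0 0 = nt y + c0 y"
    "resp_obs n (coupling n nt at c0 c1 d0 d1) y 1 0 = d1 y + at y"
    "resp_obs n (coupling n nt at c0 c1 d0 d1) y 0 1 = nt y + d0 y"
    "resp_obs n (coupling n nt at c0 c1 d0 d1) y 1 1 = c1 y + at y"
  using n y nonneg c d unfolding resp_obs_simps[OF y] coupling_def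
  by (simp_all add: sum.distrib indep_coupling_marginals)

lemma tight_on_support_coupling:
  fixes nt at c0 c1 d0 d1 \<gamma> :: "nat \<Rightarrow> real"
  assumes nt: "\<forall>y<n. nt y \<noteq> 0 \<longrightarrow> B y 0 0 \<noteq> B y 0 1 \<or> B y 0 0 \<and> B y 0 1 \<and> \<alpha> = - \<gamma> 0 - \<gamma> y"
    and at: "\<forall>y<n. at y \<noteq> 0 \<longrightarrow> B y 1 0 \<noteq> B y 1 1 \<or> B y 1 0 \<and> B y 1 1 \<and> \<alpha> = - \<gamma> y - \<gamma> (n - 1)"
    and cd: "\<forall>y<n. (c0 y \<noteq> 0 \<longrightarrow> B y 0 0) \<and> (c1 y \<noteq> 0 \<longrightarrow> B y 1 1) \<and>
      (d0 y \<noteq> 0 \<longrightarrow> B y 0 1) \<and> (d1 y \<noteq> 0 \<longrightarrow> B y 1 0)"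
  shows "tight_on_support n \<gamma> (coupling n nt at c0 c1 d0 d1) (uvec \<gamma> n \<alpha> B)"
  unfolding tight_on_support_def
proof (intro allI impI)
  fix a b c d assume ab: "a < n" "b < n" and "c < 2" "d < 2"
    and ne: "coupling n nt at c0 c1 d0 d1 a b c d \<noteq> 0"
  then consider "c = 0" "d = 0" | "c = 0" "d = 1" | "c = 1" "d = 0" | "c = 1" "d = 1"
    by linarith
  then show "type_weight (uvec \<gamma> n \<alpha> B) a b c d = \<gamma> b - \<gamma> a"
  proof cases
    case 1
    then have "b = 0" "nt a \<noteq> 0" using ne ab by (auto simp: coupling_def split: if_splits)
    then show ?thesis using nt ab 1 by (auto simp: type_weight_def uvec_simps simp del: One_nat_def)
  next
    case 2
    then have "c0 a \<noteq> 0" "c1 b \<noteq> 0" using ne ab by (auto simp: coupling_def)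
    then show ?thesis using cd ab 2 by (simp add: type_weight_def uvec_simps del: One_nat_def)
  next
    case 3
    then have "d0 a \<noteq> 0" "d1 b \<noteq> 0" using ne ab by (auto simp: coupling_def)
    then show ?thesis using cd ab 3 by (simp add: type_weight_def uvec_simps del: One_nat_def)
  next
    case 4
    then have "a = n - 1" "at b \<noteq> 0" using ne ab by (auto simp: coupling_def split: if_splits)
    then show ?thesis using at ab 4 by (auto simp: type_weight_def uvec_simps simp del: One_nat_def)
  qed
qed

definition obs_law :: "nat \<Rightarrow> (nat \<Rightarrow> nat \<Rightarrow> nat \<Rightarrow> real) \<Rightarrow> bool" where
  "obs_law n m \<longleftrightarrow> (\<forall>y<n. \<forall>d<2. \<forall>z<2. 0 \<le> m y d z) \<and> (\<forall>z<2. (\<Sum>y<n. m y 0 z + m y 1 z) = 1)"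

(* m y 1 1 - m y 1 0 is the complier mass minus the defier mass with Y1 = y, so cpl_floor m is a
   lower bound for the compliers' Y1-marginal; dfr_floor m is the same for the defiers' Y0-marginal. *)
definition cpl_floor :: "(nat \<Rightarrow> nat \<Rightarrow> nat \<Rightarrow> real) \<Rightarrow> nat \<Rightarrow> real" where
  "cpl_floor m y = max 0 (m y 1 1 - m y 1 0)"

definition dfr_floor :: "(nat \<Rightarrow> nat \<Rightarrow> nat \<Rightarrow> real) \<Rightarrow> nat \<Rightarrow> real" where
  "dfr_floor m y = max 0 (m y 0 1 - m y 0 0)"

(* Pearl's instrumental inequalities. *)
lemma sum_floors_le:
  assumes p: "\<forall>a b c d. 0 \<le> p a b c d"
  shows "(\<Sum>y<n. cpl_floor (resp_obs n p) y) \<le> (\<Sum>y<n. resp_obs n p y 0 0)"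
    and "(\<Sum>y<n. dfr_floor (resp_obs n p) y) \<le> (\<Sum>y<n. resp_obs n p y 1 0)"
proof -
  have "(\<Sum>y<n. cpl_floor (resp_obs n p) y) \<le> (\<Sum>y<n. \<Sum>a<n. p a y 0 1)"
    using p by (intro sum_mono)
      (auto simp: cpl_floor_def resp_obs_simps sum.distrib sum_nonneg simp del: One_nat_def)
  also have "\<dots> = (\<Sum>a<n. \<Sum>b<n. p a b 0 1)" by (rule sum.swap)
  also have "\<dots> \<le> (\<Sum>y<n. resp_obs n p y 0 0)"
    using p by (intro sum_mono) (auto simp: resp_obs_simps intro!: sum_mono)
  finally show "(\<Sum>y<n. cpl_floor (resp_obs n p) y) \<le> (\<Sum>y<n. resp_obs n p y 0 0)" .
  have "(\<Sum>y<n. dfr_floor (resp_obs n p) y) \<le> (\<Sum>y<n. \<Sum>b<n. p y b 1 0)"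
    using p by (intro sum_mono)
      (auto simp: dfr_floor_def resp_obs_simps sum.distrib sum_nonneg simp del: One_nat_def)
  also have "\<dots> = (\<Sum>b<n. \<Sum>a<n. p a b 1 0)" by (rule sum.swap)
  also have "\<dots> \<le> (\<Sum>y<n. resp_obs n p y 1 0)"
    using p by (intro sum_mono) (auto simp: resp_obs_simps intro!: sum_mono simp del: One_nat_def)
  finally show "(\<Sum>y<n. dfr_floor (resp_obs n p) y) \<le> (\<Sum>y<n. resp_obs n p y 1 0)" .
qed

definition feasible_split :: "nat \<Rightarrow> (nat \<Rightarrow> nat \<Rightarrow> nat \<Rightarrow> real) \<Rightarrow> (nat \<Rightarrow> real) \<Rightarrow> (nat \<Rightarrow> real) \<Rightarrow> bool" where
  "feasible_split n m cp df \<longleftrightarrow>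
     (\<forall>y<n. cpl_floor m y \<le> cp y \<and> cp y \<le> m y 1 1 \<and> dfr_floor m y \<le> df y \<and> df y \<le> m y 0 1) \<and>
     sum cp {..<n} - sum df {..<n} = (\<Sum>y<n. m y 1 1) - (\<Sum>y<n. m y 1 0)"

(* Once the compliers' Y1-marginal cp and the defiers' Y0-marginal df are chosen, the never-taker,
   always-taker, complier-Y0 and defier-Y1 marginals are forced by the observed vector m. *)
definition split_coupling :: "nat \<Rightarrow> (nat \<Rightarrow> nat \<Rightarrow> nat \<Rightarrow> real) \<Rightarrow> (nat \<Rightarrow> real) \<Rightarrow> (nat \<Rightarrow> real) \<Rightarrow>
    nat \<Rightarrow> nat \<Rightarrow> nat \<Rightarrow> nat \<Rightarrow> real" where
  "split_coupling n m cp df = coupling n (\<lambda>y. m y 0 1 - df y) (\<lambda>y. m y 1 1 - cp y)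
     (\<lambda>y. m y 0 0 - m y 0 1 + df y) cp df (\<lambda>y. m y 1 0 - m y 1 1 + cp y)"

lemma feasible_split_sums:
  assumes "obs_law n m" "feasible_split n m cp df"
  shows "(\<Sum>y<n. m y 0 0 - m y 0 1 + df y) = sum cp {..<n}"
    and "(\<Sum>y<n. m y 1 0 - m y 1 1 + cp y) = sum df {..<n}"
proof -
  have tot: "(\<Sum>y<n. m y 0 z + m y 1 z) = 1" if "z < 2" for z
    using assms(1) that unfolding obs_law_def by blast
  show "(\<Sum>y<n. m y 0 0 - m y 0 1 + df y) = sum cp {..<n}"
    "(\<Sum>y<n. m y 1 0 - m y 1 1 + cp y) = sum df {..<n}"
    using tot[of 0] tot[of 1] assms(2) unfolding feasible_split_def
    by (simp_all add: sum.distrib sum_subtractf)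
qed

lemma split_coupling_law:
  assumes n: "0 < n" and m: "obs_law n m" and split: "feasible_split n m cp df"
  shows "resp_law n (split_coupling n m cp df)"
    and "\<forall>y<n. \<forall>d<2. \<forall>z<2. resp_obs n (split_coupling n m cp df) y d z = m y d z"
proof -
  let ?\<pi> = "split_coupling n m cp df"
  have nonneg: "\<forall>y<n. 0 \<le> m y 0 1 - df y \<and> 0 \<le> m y 1 1 - cp y \<and> 0 \<le> m y 0 0 - m y 0 1 + df y \<and>
      0 \<le> cp y \<and> 0 \<le> df y \<and> 0 \<le> m y 1 0 - m y 1 1 + cp y"
    using split unfolding feasible_split_def cpl_floor_def dfr_floor_def by force
  have obs: "resp_obs n ?\<pi> y 0 0 = m y 0 0" "resp_obs n ?\<pi> y 1 0 = m y 1 0"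
      "resp_obs n ?\<pi> y 0 1 = m y 0 1" "resp_obs n ?\<pi> y 1 1 = m y 1 1" if "y < n" for y
    using resp_obs_coupling[OF n that] feasible_split_sums[OF m split] nonneg that
    unfolding split_coupling_def by auto
  then show "\<forall>y<n. \<forall>d<2. \<forall>z<2. resp_obs n ?\<pi> y d z = m y d z"
    by (auto simp: less_2_cases_iff)
  have "(\<Sum>a<n. \<Sum>b<n. \<Sum>c<2. \<Sum>d<2. ?\<pi> a b c d) = 1"
    using resp_obs_total[of 0 n ?\<pi>] m obs unfolding obs_law_def by simp
  then show "resp_law n ?\<pi>"
    using nonneg unfolding resp_law_def split_coupling_def coupling_def
    by (auto intro!: divide_nonneg_nonneg sum_nonneg)
qed

(* The hypotheses of tight_on_support_coupling for split_coupling n m cp df. *)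
definition tight_split :: "(nat \<Rightarrow> real) \<Rightarrow> nat \<Rightarrow> (nat \<Rightarrow> nat \<Rightarrow> nat \<Rightarrow> real) \<Rightarrow> (nat \<Rightarrow> real) \<Rightarrow>
    (nat \<Rightarrow> real) \<Rightarrow> real \<Rightarrow> (nat \<Rightarrow> nat \<Rightarrow> nat \<Rightarrow> bool) \<Rightarrow> bool" where
  "tight_split \<gamma> n m cp df \<alpha> B \<longleftrightarrow> (\<forall>y<n.
     (m y 0 1 - df y \<noteq> 0 \<longrightarrow> B y 0 0 \<noteq> B y 0 1 \<or> B y 0 0 \<and> B y 0 1 \<and> \<alpha> = - \<gamma> 0 - \<gamma> y) \<and>
     (m y 1 1 - cp y \<noteq> 0 \<longrightarrow> B y 1 0 \<noteq> B y 1 1 \<or> B y 1 0 \<and> B y 1 1 \<and> \<alpha> = - \<gamma> y - \<gamma> (n - 1)) \<and>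
     (m y 0 0 - m y 0 1 + df y \<noteq> 0 \<longrightarrow> B y 0 0) \<and> (cp y \<noteq> 0 \<longrightarrow> B y 1 1) \<and>
     (df y \<noteq> 0 \<longrightarrow> B y 0 1) \<and> (m y 1 0 - m y 1 1 + cp y \<noteq> 0 \<longrightarrow> B y 1 0))"

definition has_tight_coupling :: "(nat \<Rightarrow> real) \<Rightarrow> nat \<Rightarrow> (nat \<Rightarrow> nat \<Rightarrow> nat \<Rightarrow> real) \<Rightarrow> bool" where
  "has_tight_coupling \<gamma> n m \<longleftrightarrow> (\<exists>\<pi> v. resp_law n \<pi> \<and> (\<forall>y<n. \<forall>d<2. \<forall>z<2. resp_obs n \<pi> y d z = m y d z) \<and>
     v \<in> Vset \<gamma> n \<and> tight_on_support n \<gamma> \<pi> v)"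

lemma has_tight_couplingI:
  assumes "0 < n" "obs_law n m" "feasible_split n m cp df"
    and "uvec \<gamma> n \<alpha> B \<in> Vset \<gamma> n" "tight_split \<gamma> n m cp df \<alpha> B"
  shows "has_tight_coupling \<gamma> n m"
proof -
  have "tight_on_support n \<gamma> (split_coupling n m cp df) (uvec \<gamma> n \<alpha> B)"
    using assms(5) unfolding tight_split_def split_coupling_def
    by (intro tight_on_support_coupling) auto
  then show ?thesis
    using split_coupling_law[OF assms(1-3)] assms(4) unfolding has_tight_coupling_def by blast
qed

lemma cpl_fill_tight_split:
  fixes m :: "nat \<Rightarrow> nat \<Rightarrow> nat \<Rightarrow> real" and cp df \<gamma> :: "nat \<Rightarrow> real"
  assumes n: "0 < n" and t: "t < n"
    and df: "\<forall>y<n. df y = dfr_floor m y"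
    and below: "\<forall>y<t. cp y = m y 1 1" and above: "\<forall>y<n. t < y \<longrightarrow> cp y = cpl_floor m y"
    and ex: "0 < t \<Longrightarrow> (\<exists>i<n. m i 0 0 - m i 0 1 + df i \<noteq> 0) \<and> (\<exists>j<n. df j \<noteq> 0)"
  obtains \<alpha> B where "uvec \<gamma> n \<alpha> B \<in> Vset \<gamma> n" "tight_split \<gamma> n m cp df \<alpha> B"
proof -
  define \<alpha> where "\<alpha> = - \<gamma> t - \<gamma> (n - 1)"
  define B where "B (i::nat) (d::nat) (z::nat) =
    (if d = 0 then (if z = 0 then df i = 0 else df i \<noteq> 0) \<or> (t = 0 \<and> i = n - 1)
     else i \<le> t \<or> (if z = 0 then cp i = 0 else cp i \<noteq> 0))" for i d z
  have cd: "(m y 0 0 - m y 0 1 + df y \<noteq> 0 \<longrightarrow> B y 0 0) \<and> (cp y \<noteq> 0 \<longrightarrow> B y 1 1) \<and>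
      (df y \<noteq> 0 \<longrightarrow> B y 0 1) \<and> (m y 1 0 - m y 1 1 + cp y \<noteq> 0 \<longrightarrow> B y 1 0)" if "y < n" for y
    using df above that unfolding B_def cpl_floor_def dfr_floor_def by (auto simp: not_le)
  have at: "B y 1 0 \<noteq> B y 1 1 \<or> B y 1 0 \<and> B y 1 1 \<and> \<alpha> = - \<gamma> y - \<gamma> (n - 1)"
    if "m y 1 1 - cp y \<noteq> 0" for y
  proof -
    have "\<not> y < t" using below that by auto
    then show ?thesis unfolding B_def \<alpha>_def by (cases "y = t") auto
  qed
  have "tight_split \<gamma> n m cp df \<alpha> B"
    using cd at unfolding tight_split_def by (auto simp: B_def \<alpha>_def)
  moreover have "uvec \<gamma> n \<alpha> B \<in> Vset \<gamma> n"
  proof (cases "t = 0")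
    case True
    then have "S2 n B" unfolding S2_def B_def using n by auto
    then show ?thesis unfolding Vset_def \<alpha>_def True by blast
  next
    case False
    then have "S3 n B t" unfolding S3_def using t ex cd by (auto simp: B_def)
    then show ?thesis unfolding Vset_def \<alpha>_def by blast
  qed
  ultimately show ?thesis using that by blast
qed

lemma dfr_fill_tight_split:
  fixes m :: "nat \<Rightarrow> nat \<Rightarrow> nat \<Rightarrow> real" and cp df \<gamma> :: "nat \<Rightarrow> real"
  assumes n: "0 < n" and t: "t < n"
    and cp: "\<forall>y<n. cp y = cpl_floor m y"
    and above: "\<forall>y<n. t < y \<longrightarrow> df y = m y 0 1" and below: "\<forall>y<t. df y = dfr_floor m y"
    and ex: "t < n - 1 \<Longrightarrow> (\<exists>i<n. m i 1 0 - m i 1 1 + cp i \<noteq> 0) \<and> (\<exists>j<n. cp j \<noteq> 0)"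
  obtains \<alpha> B where "uvec \<gamma> n \<alpha> B \<in> Vset \<gamma> n" "tight_split \<gamma> n m cp df \<alpha> B"
proof -
  define \<alpha> where "\<alpha> = - \<gamma> 0 - \<gamma> t"
  define B where "B (i::nat) (d::nat) (z::nat) =
    (if d = 0 then t \<le> i \<or> (if z = 0 then df i = 0 else df i \<noteq> 0)
     else (if z = 0 then cp i = 0 else cp i \<noteq> 0) \<or> (t = n - 1 \<and> i = 0))" for i d z
  have cd: "(m y 0 0 - m y 0 1 + df y \<noteq> 0 \<longrightarrow> B y 0 0) \<and> (cp y \<noteq> 0 \<longrightarrow> B y 1 1) \<and>
      (df y \<noteq> 0 \<longrightarrow> B y 0 1) \<and> (m y 1 0 - m y 1 1 + cp y \<noteq> 0 \<longrightarrow> B y 1 0)" if "y < n" for y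
    using cp below that unfolding B_def cpl_floor_def dfr_floor_def by (cases "y < t") auto
  have nt: "B y 0 0 \<noteq> B y 0 1 \<or> B y 0 0 \<and> B y 0 1 \<and> \<alpha> = - \<gamma> 0 - \<gamma> y"
    if "y < n" "m y 0 1 - df y \<noteq> 0" for y
  proof -
    have "\<not> t < y" using above that by auto
    then show ?thesis unfolding B_def \<alpha>_def by (cases "y = t") auto
  qed
  have at: "B y 1 0 \<noteq> B y 1 1 \<or> B y 1 0 \<and> B y 1 1 \<and> \<alpha> = - \<gamma> y - \<gamma> (n - 1)" for y
    unfolding B_def \<alpha>_def by (cases "t = n - 1 \<and> y = 0") auto
  have "tight_split \<gamma> n m cp df \<alpha> B"
    using cd nt at unfolding tight_split_def by blast
  moreover have "uvec \<gamma> n \<alpha> B \<in> Vset \<gamma> n"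
  proof (cases "t = n - 1")
    case True
    then have "S2 n B" unfolding S2_def B_def using n by auto
    then show ?thesis unfolding Vset_def \<alpha>_def True by blast
  next
    case False
    then have "t < n - 1" using t by simp
    then have "S1 n B t" unfolding S1_def using t ex cd by (auto simp: B_def)
    then show ?thesis unfolding Vset_def \<alpha>_def by blast
  qed
  ultimately show ?thesis using that by blast
qed

lemma has_tight_coupling_cpl_fill:
  fixes m :: "nat \<Rightarrow> nat \<Rightarrow> nat \<Rightarrow> real" and g \<gamma> :: "nat \<Rightarrow> real"
  assumes n: "0 < n" and m: "obs_law n m" and t: "t < n"
    and g: "\<forall>y<n. 0 \<le> g y \<and> g y \<le> m y 1 1 - cpl_floor m y"
    and bal: "sum (cpl_floor m) {..<n} + sum g {..<n} - sum (dfr_floor m) {..<n} =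
      (\<Sum>y<n. m y 1 1) - (\<Sum>y<n. m y 1 0)"
    and below: "\<forall>y<t. g y = m y 1 1 - cpl_floor m y"
    and above: "\<forall>y<n. t < y \<longrightarrow> g y = 0"
    and pos: "0 < t \<longrightarrow> 0 < g t"
  shows "has_tight_coupling \<gamma> n m"
proof -
  define cp df where "cp y = cpl_floor m y + g y" and "df y = dfr_floor m y" for y
  have split: "feasible_split n m cp df"
    using g m bal unfolding feasible_split_def obs_law_def cp_def df_def dfr_floor_def
    by (force simp: sum.distrib)
  have c0_d1: "\<forall>y<n. 0 \<le> cp y \<and> 0 \<le> m y 1 0 - m y 1 1 + cp y"
    using split unfolding feasible_split_def cpl_floor_def by force
  have ex: "(\<exists>i<n. m i 0 0 - m i 0 1 + df i \<noteq> 0) \<and> (\<exists>j<n. df j \<noteq> 0)" if "0 < t"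
  proof -
    have "0 < cp t" "0 < m t 1 0 - m t 1 1 + cp t"
      using pos that unfolding cp_def cpl_floor_def by auto
    then show ?thesis
      using ex_nonzero_if_sum_eq_pos[OF _ t, of cp "\<lambda>y. m y 0 0 - m y 0 1 + df y"]
        ex_nonzero_if_sum_eq_pos[OF _ t, of "\<lambda>y. m y 1 0 - m y 1 1 + cp y" df]
        c0_d1 feasible_split_sums[OF m split] by auto
  qed
  have eqs: "\<forall>y<n. df y = dfr_floor m y" "\<forall>y<t. cp y = m y 1 1" "\<forall>y<n. t < y \<longrightarrow> cp y = cpl_floor m y"
    using below above unfolding cp_def df_def by auto
  obtain \<alpha> B where "uvec \<gamma> n \<alpha> B \<in> Vset \<gamma> n" "tight_split \<gamma> n m cp df \<alpha> B"
    by (rule cpl_fill_tight_split[OF n t eqs ex])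
  then show ?thesis by (rule has_tight_couplingI[OF n m split])
qed

lemma has_tight_coupling_dfr_fill:
  fixes m :: "nat \<Rightarrow> nat \<Rightarrow> nat \<Rightarrow> real" and h \<gamma> :: "nat \<Rightarrow> real"
  assumes n: "0 < n" and m: "obs_law n m" and t: "t < n"
    and h: "\<forall>y<n. 0 \<le> h y \<and> h y \<le> m y 0 1 - dfr_floor m y"
    and bal: "sum (cpl_floor m) {..<n} - sum (dfr_floor m) {..<n} - sum h {..<n} =
      (\<Sum>y<n. m y 1 1) - (\<Sum>y<n. m y 1 0)"
    and above: "\<forall>y<n. t < y \<longrightarrow> h y = m y 0 1 - dfr_floor m y"
    and below: "\<forall>y<t. h y = 0"
    and pos: "t < n - 1 \<longrightarrow> 0 < h t"
  shows "has_tight_coupling \<gamma> n m"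
proof -
  define cp df where "cp y = cpl_floor m y" and "df y = dfr_floor m y + h y" for y
  have split: "feasible_split n m cp df"
    using h m bal unfolding feasible_split_def obs_law_def cp_def df_def cpl_floor_def
    by (force simp: sum.distrib)
  have c0_d0: "\<forall>y<n. 0 \<le> df y \<and> 0 \<le> m y 0 0 - m y 0 1 + df y"
    using split unfolding feasible_split_def dfr_floor_def by force
  have ex: "(\<exists>i<n. m i 1 0 - m i 1 1 + cp i \<noteq> 0) \<and> (\<exists>j<n. cp j \<noteq> 0)" if "t < n - 1"
  proof -
    have "0 < df t" "0 < m t 0 0 - m t 0 1 + df t"
      using pos that unfolding df_def dfr_floor_def by auto
    then show ?thesis
      using ex_nonzero_if_sum_eq_pos[OF _ t, of df "\<lambda>y. m y 1 0 - m y 1 1 + cp y"]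
        ex_nonzero_if_sum_eq_pos[OF _ t, of "\<lambda>y. m y 0 0 - m y 0 1 + df y" cp]
        c0_d0 feasible_split_sums[OF m split] by auto
  qed
  have eqs: "\<forall>y<n. cp y = cpl_floor m y" "\<forall>y<n. t < y \<longrightarrow> df y = m y 0 1" "\<forall>y<t. df y = dfr_floor m y"
    using below above unfolding cp_def df_def by auto
  obtain \<alpha> B where "uvec \<gamma> n \<alpha> B \<in> Vset \<gamma> n" "tight_split \<gamma> n m cp df \<alpha> B"
    by (rule dfr_fill_tight_split[OF n t eqs ex])
  then show ?thesis by (rule has_tight_couplingI[OF n m split])
qed

(* If the floors leave room for more compliers than defiers, the defiers stay at their floor and
   compliers are added from the smallest outcome upwards; otherwise the compliers stay at their
   floor and defiers are added from the largest outcome downwards.  The threshold where the fill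
   stops determines the vector of V that is tight. *)
lemma has_tight_coupling_if_floors:
  fixes m :: "nat \<Rightarrow> nat \<Rightarrow> nat \<Rightarrow> real" and \<gamma> :: "nat \<Rightarrow> real"
  assumes n: "0 < n" and m: "obs_law n m"
    and cpl: "(\<Sum>y<n. cpl_floor m y) \<le> (\<Sum>y<n. m y 0 0)"
    and dfr: "(\<Sum>y<n. dfr_floor m y) \<le> (\<Sum>y<n. m y 1 0)"
  shows "has_tight_coupling \<gamma> n m"
proof -
  let ?L1 = "sum (cpl_floor m) {..<n}" and ?L2 = "sum (dfr_floor m) {..<n}"
  let ?k = "(\<Sum>y<n. m y 1 1) - (\<Sum>y<n. m y 1 0)"
  have m0: "\<forall>y<n. \<forall>d<2. \<forall>z<2. 0 \<le> m y d z" and tot: "\<forall>z<2. (\<Sum>y<n. m y 0 z + m y 1 z) = 1"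
    using m unfolding obs_law_def by blast+
  show ?thesis
  proof (cases "?L1 \<le> ?k + ?L2")
    case True
    define x where "x y = m y 1 1 - cpl_floor m y" for y
    have x0: "\<forall>y<n. 0 \<le> x y" using m0 unfolding x_def cpl_floor_def by auto
    have R: "0 \<le> ?k + ?L2 - ?L1" "?k + ?L2 - ?L1 \<le> sum x {..<n}"
      using True dfr unfolding x_def by (simp_all add: sum_subtractf)
    obtain g t where "t < n" "\<forall>y<n. 0 \<le> g y \<and> g y \<le> x y" "sum g {..<n} = ?k + ?L2 - ?L1"
      "\<forall>y<t. g y = x y" "\<forall>y<n. t < y \<longrightarrow> g y = 0" "0 < t \<longrightarrow> 0 < g t"
      by (rule greedy_fill[OF n x0 R])
    then show ?thesis
      unfolding x_def by (intro has_tight_coupling_cpl_fill[OF n m]) auto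
  next
    case False
    define x where "x y = m y 0 1 - dfr_floor m y" for y
    have x0: "\<forall>y<n. 0 \<le> x y" using m0 unfolding x_def dfr_floor_def by auto
    have R: "0 \<le> ?L1 - ?k - ?L2" "?L1 - ?k - ?L2 \<le> sum x {..<n}"
      using False cpl tot[rule_format, of 0] tot[rule_format, of 1] unfolding x_def
      by (simp_all add: sum_subtractf sum.distrib)
    obtain h t where "t < n" "\<forall>y<n. 0 \<le> h y \<and> h y \<le> x y" "sum h {..<n} = ?L1 - ?k - ?L2"
      "\<forall>y<n. t < y \<longrightarrow> h y = x y" "\<forall>y<t. h y = 0" "t < n - 1 \<longrightarrow> 0 < h t"
      by (rule greedy_fill_down[OF n x0 R])
    then show ?thesis
      unfolding x_def by (intro has_tight_coupling_dfr_fill[OF n m]) auto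
  qed
qed

lemma resp_lower_attained:
  fixes \<gamma> :: "nat \<Rightarrow> real"
  assumes mono: "strict_mono_on {..<n} \<gamma>" and p: "resp_law n p"
  obtains \<pi> where "resp_law n \<pi>" "resp_obs n \<pi> = resp_obs n p" "resp_ATE n \<gamma> \<pi> = resp_lower \<gamma> n p"
proof -
  have p0: "\<forall>a b c d. 0 \<le> p a b c d" using p unfolding resp_law_def by blast
  have "obs_law n (resp_obs n p)"
    using p resp_obs_total[of _ n p] unfolding obs_law_def resp_law_def resp_obs_def
    by (auto intro!: sum_nonneg)
  then have "has_tight_coupling \<gamma> n (resp_obs n p)"
    using has_tight_coupling_if_floors resp_law_pos[OF p] sum_floors_le[OF p0] by blast
  then obtain \<pi> v where \<pi>: "resp_law n \<pi>" "\<forall>y<n. \<forall>d<2. \<forall>z<2. resp_obs n \<pi> y d z = resp_obs n p y d z"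
    and v: "v \<in> Vset \<gamma> n" "tight_on_support n \<gamma> \<pi> v"
    unfolding has_tight_coupling_def by blast
  have obs: "resp_obs n \<pi> = resp_obs n p" by (rule resp_obs_eqI[OF \<pi>(2)])
  have "resp_ATE n \<gamma> \<pi> = ip n v (resp_obs n p)"
    using ip_resp_obs_eq_resp_ATE[OF v(2)] obs by simp
  also have "\<dots> \<le> resp_lower \<gamma> n p" by (rule ip_le_resp_lower[OF v(1)])
  also have "\<dots> \<le> resp_ATE n \<gamma> \<pi>"
    using resp_lower_le_resp_ATE[OF mono \<pi>(1)] obs unfolding resp_lower_def by simp
  finally show ?thesis using that \<pi>(1) obs by (simp add: antisym)
qed

lemma resp_upper_attained:
  fixes \<gamma> :: "nat \<Rightarrow> real"
  assumes mono: "strict_mono_on {..<n} \<gamma>" and p: "resp_law n p"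
  obtains \<pi> where "resp_law n \<pi>" "resp_obs n \<pi> = resp_obs n p"
    "resp_ATE n \<gamma> \<pi> = - resp_lower \<gamma> n (resp_swap p)"
proof -
  obtain \<pi> where \<pi>: "resp_law n \<pi>" "resp_obs n \<pi> = resp_obs n (resp_swap p)"
    "resp_ATE n \<gamma> \<pi> = resp_lower \<gamma> n (resp_swap p)"
    using resp_lower_attained[OF mono resp_law_swap[OF p]] by blast
  have "resp_obs n (resp_swap \<pi>) = resp_obs n p"
    using \<pi>(2) by (intro resp_obs_eqI) (simp add: resp_obs_swap)
  then show ?thesis
    using that[of "resp_swap \<pi>"] resp_law_swap[OF \<pi>(1)] \<pi>(3) by (simp add: resp_ATE_swap)
qed

theorem theorem2:
  fixes n :: nat and \<gamma> :: "nat \<Rightarrow> real"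
  assumes "strict_mono_on {..<n} \<gamma>"
  shows "(\<forall>q. IV_law n q \<and> (\<forall>z<2. 0 < pZ n q z) \<longrightarrow>
            lower_bd \<gamma> n q \<le> ATE n \<gamma> q \<and> ATE n \<gamma> q \<le> upper_bd \<gamma> n q) \<and>
         (\<forall>q. IV_law n q \<and> (\<forall>z<2. 0 < pZ n q z) \<longrightarrow>
            (\<exists>q1. IV_law n q1 \<and> obs n q1 = obs n q \<and> ATE n \<gamma> q1 = lower_bd \<gamma> n q) \<and>
            (\<exists>q2. IV_law n q2 \<and> obs n q2 = obs n q \<and> ATE n \<gamma> q2 = upper_bd \<gamma> n q))"
proof -
  have bounds: "lower_bd \<gamma> n q \<le> ATE n \<gamma> q \<and> ATE n \<gamma> q \<le> upper_bd \<gamma> n q"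
    and sharp: "(\<exists>q1. IV_law n q1 \<and> obs n q1 = obs n q \<and> ATE n \<gamma> q1 = lower_bd \<gamma> n q) \<and>
      (\<exists>q2. IV_law n q2 \<and> obs n q2 = obs n q \<and> ATE n \<gamma> q2 = upper_bd \<gamma> n q)"
    if q: "IV_law n q" and pZ: "\<forall>z<2. 0 < pZ n q z" for q
  proof -
    let ?p = "resp_of q"
    have p: "resp_law n ?p" by (rule resp_law_resp_of[OF q])
    note lower = lower_bd_eq_resp_lower[OF q pZ] and upper = upper_bd_eq_resp_lower_swap[OF q pZ]
    show "lower_bd \<gamma> n q \<le> ATE n \<gamma> q \<and> ATE n \<gamma> q \<le> upper_bd \<gamma> n q"
      using resp_lower_le_resp_ATE[OF assms p] resp_lower_le_resp_ATE[OF assms resp_law_swap[OF p]]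
      unfolding lower upper ATE_eq_resp_ATE resp_ATE_swap by simp
    obtain \<pi>1 where "resp_law n \<pi>1" "resp_obs n \<pi>1 = resp_obs n ?p" "resp_ATE n \<gamma> \<pi>1 = lower_bd \<gamma> n q"
      using resp_lower_attained[OF assms p] unfolding lower by blast
    moreover obtain \<pi>2 where "resp_law n \<pi>2" "resp_obs n \<pi>2 = resp_obs n ?p" "resp_ATE n \<gamma> \<pi>2 = upper_bd \<gamma> n q"
      using resp_upper_attained[OF assms p] unfolding upper by blast
    ultimately show "(\<exists>q1. IV_law n q1 \<and> obs n q1 = obs n q \<and> ATE n \<gamma> q1 = lower_bd \<gamma> n q) \<and>
      (\<exists>q2. IV_law n q2 \<and> obs n q2 = obs n q \<and> ATE n \<gamma> q2 = upper_bd \<gamma> n q)"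
      using IV_law_replace_resp[OF q] by metis
  qed
  then show ?thesis by blast
qed

end
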